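(* Let $a,b,c,k,m>0$ and consider the system $$\frac{dx}{dt}=bx(1-x-cy),\qquad \frac{dy}{dt}=y\Big(\frac{1}{1+kx}-y-ax-mxy\Big).$$ Define $k^*=\frac1a-1$, $m_1=1-ac-k$, $m_2=\frac{2ack+ac-k-1}{1+k}$, the cubic $u(x)=A_1x^3+A_2x^2+A_3x+A_4$ with $A_1=km$, $A_2=(-ac-m+1)k+m$, $A_3=-ac-k-m+1$, $A_4=c-1$, and (when the discriminant $\Delta=4A_2^2-12A_1A_3$ of $u'$ is positive) let $x_{v2}$ denote the larger real root of $u'(x)=3A_1x^2+2A_2x+A_3$. A positive equilibrium is an equilibrium $(x,y)$ with $x>0,y>0$. Then: (1) If $m=m_1$, $0<c<1$ and $0<k<k^*$, the system has a unique positive equilibrium. (2) Suppose $m>m_1$. (a) Suppose $c>1$ (and $\Delta>0$). (i) If $u(x_{v2})=0$ and $m>m_2$, the system has a unique positive equilibrium. (ii) If $u(x_{v2})<0$: if $m>m_2$ and $k\ge k^*$, the system has a unique positive equilibrium; if $m>m_2$ and $0<k<k^*$, the system has two positive equilibria; if $m=m_2$, the system has a unique positive equilibrium; if $0<m<m_2$ and $k>k^*$, the system has a unique positive equilibrium. (b) If $0<c\le 1$ and $0<k<k^*$, the system has a unique positive equilibrium. (3) If $0<m<m_1$, $0<c<1$ and $0<k<k^*$, the system has a unique positive equilibrium.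
   Context: All parameters are positive. Positive equilibria have the form $(x,(1-x)/c)$ where $x\in(0,1)$ is a root of $u$. *)

theory Defs
  imports Complex_Main
begin

definition pos_equilibria :: "real \<Rightarrow> real \<Rightarrow> real \<Rightarrow> real \<Rightarrow> real \<Rightarrow> (real \<times> real) set" where
  "pos_equilibria a b c k m =
     {(x, y). x > 0 \<and> y > 0 \<and> b * x * (1 - x - c * y) = 0 \<and>
              y * (1 / (1 + k * x) - y - a * x - m * x * y) = 0}"

definition kstar :: "real \<Rightarrow> real" where "kstar a = 1 / a - 1"
definition m1 :: "real \<Rightarrow> real \<Rightarrow> real \<Rightarrow> real" where "m1 a c k = 1 - a * c - k"
definition m2 :: "real \<Rightarrow> real \<Rightarrow> real \<Rightarrow> real" where
  "m2 a c k = (2 * a * c * k + a * c - k - 1) / (1 + k)"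

definition A1 :: "real \<Rightarrow> real \<Rightarrow> real" where "A1 k m = k * m"
definition A2 :: "real \<Rightarrow> real \<Rightarrow> real \<Rightarrow> real \<Rightarrow> real" where
  "A2 a c k m = (- a * c - m + 1) * k + m"
definition A3 :: "real \<Rightarrow> real \<Rightarrow> real \<Rightarrow> real \<Rightarrow> real" where
  "A3 a c k m = - a * c - k - m + 1"
definition A4 :: "real \<Rightarrow> real" where "A4 c = c - 1"

definition u :: "real \<Rightarrow> real \<Rightarrow> real \<Rightarrow> real \<Rightarrow> real \<Rightarrow> real" where
  "u a c k m x = A1 k m * x ^ 3 + A2 a c k m * x ^ 2 + A3 a c k m * x + A4 c"

definition Delta :: "real \<Rightarrow> real \<Rightarrow> real \<Rightarrow> real \<Rightarrow> real" where
  "Delta a c k m = 4 * (A2 a c k m)^2 - 12 * A1 k m * A3 a c k m"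

text \<open>Larger real root of u'(x) = 3 A1 x^2 + 2 A2 x + A3 (meaningful when Delta > 0, A1 > 0).\<close>
definition xv2 :: "real \<Rightarrow> real \<Rightarrow> real \<Rightarrow> real \<Rightarrow> real" where
  "xv2 a c k m = (- 2 * A2 a c k m + sqrt (Delta a c k m)) / (6 * A1 k m)"

end

theory Submission
  imports Defs
begin

text \<open>Along the prey nullcline \<open>y = (1 - x) / c\<close>, clearing denominators turns the predator
  equation into the cubic \<open>u\<close>, so positive equilibria correspond to the roots of \<open>u\<close> in
  \<open>(0, 1)\<close>. If \<open>u 0 = c - 1 \<le> 0 < u 1\<close>, such a root exists by the intermediate value theorem,
  and it is unique because the coefficients of \<open>u\<close> change sign only once (Descartes).
  If \<open>c > 1\<close> and \<open>A3 < 0\<close>, then \<open>u'\<close> has one negative and one positive root \<open>x\<^sub>v\<^sub>2\<close>, so \<open>u\<close>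
  decreases on \<open>[0, x\<^sub>v\<^sub>2]\<close> and increases afterwards. The sign of \<open>u'(1) = (1 + k)(m - m\<^sub>2)\<close>
  places \<open>x\<^sub>v\<^sub>2\<close> relative to 1, and the sign of \<open>u(1) = a c (k\<^sup>* - k)\<close> decides whether \<open>u\<close>
  crosses zero a second time before 1.\<close>

definition cubic :: "real \<Rightarrow> real \<Rightarrow> real \<Rightarrow> real \<Rightarrow> real \<Rightarrow> real" where
  "cubic A B C D x = A * x ^ 3 + B * x ^ 2 + C * x + D"

definition cubic_crit :: "real \<Rightarrow> real \<Rightarrow> real \<Rightarrow> real" where
  "cubic_crit A B C = (- 2 * B + sqrt (4 * B ^ 2 - 12 * A * C)) / (6 * A)"

definition unit_roots :: "(real \<Rightarrow> real) \<Rightarrow> real set" where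
  "unit_roots f = {x. 0 < x \<and> x < 1 \<and> f x = 0}"

lemma continuous_on_cubic: "continuous_on S (cubic A B C D)"
  unfolding cubic_def by (intro continuous_intros)

lemma has_real_derivative_cubic:
  "(cubic A B C D has_real_derivative 3 * A * x ^ 2 + 2 * B * x + C) (at x)"
  unfolding cubic_def by (auto intro!: derivative_eq_intros simp: power2_eq_square)

lemma sign_change_imp_root:
  fixes f :: "real \<Rightarrow> real"
  assumes "continuous_on {x..y} f" "x < y" "f x * f y < 0"
  shows "\<exists>r. x < r \<and> r < y \<and> f r = 0"
proof -
  have "f x < 0 \<and> 0 < f y \<or> f y < 0 \<and> 0 < f x"
    using assms(3) by (auto simp: mult_less_0_iff)
  then obtain r where "x \<le> r" "r \<le> y" "f r = 0"
    using IVT'[of f x 0 y] IVT2'[of f y 0 x] assms(1,2) by force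
  moreover have "f x \<noteq> 0" "f y \<noteq> 0" using assms(3) by auto
  ultimately show ?thesis by (metis order.order_iff_strict)
qed

text \<open>Descartes' rule of signs for a single sign change, made explicit: for two positive roots,
  \<open>x\<^sup>2 p(y) - y\<^sup>2 p(x)\<close> (if \<open>C \<le> 0\<close>) or \<open>x p(y) - y p(x)\<close> (if \<open>B \<ge> 0\<close>) is \<open>y - x\<close> times a
  positive number.\<close>

lemma cubic_pos_roots_unique:
  assumes "A > 0" "D \<le> 0" "C \<le> 0 \<or> 0 \<le> B"
    and "0 < x" "0 < y" "cubic A B C D x = 0" "cubic A B C D y = 0"
  shows "x = y"
proof (cases "C \<le> 0")
  case True
  have "x\<^sup>2 * cubic A B C D y - y\<^sup>2 * cubic A B C D x
      = (y - x) * (A * x\<^sup>2 * y\<^sup>2 - C * (x * y) - D * (x + y))"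
    unfolding cubic_def by (simp add: power2_eq_square power3_eq_cube algebra_simps)
  moreover have "A * x\<^sup>2 * y\<^sup>2 - C * (x * y) - D * (x + y) > 0"
  proof -
    have "C * (x * y) \<le> 0" "D * (x + y) \<le> 0"
      using assms True by (simp_all add: mult_nonpos_nonneg)
    moreover have "A * x\<^sup>2 * y\<^sup>2 > 0" using assms by simp
    ultimately show ?thesis by linarith
  qed
  ultimately show ?thesis using assms(6,7) by simp
next
  case False
  have "x * cubic A B C D y - y * cubic A B C D x
      = (y - x) * (A * x * y * (x + y) + B * (x * y) - D)"
    unfolding cubic_def by (simp add: power2_eq_square power3_eq_cube algebra_simps)
  moreover have "A * x * y * (x + y) + B * (x * y) - D > 0"
  proof -
    have "B * (x * y) \<ge> 0" using assms False by simp
    moreover have "A * x * y * (x + y) > 0" using assms by simp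
    ultimately show ?thesis using assms(2) by linarith
  qed
  ultimately show ?thesis using assms(6,7) by simp
qed

lemma cubic_has_unit_root:
  assumes "D < 0 \<or> D = 0 \<and> C < 0" "cubic A B C D 1 > 0"
  shows "\<exists>r. 0 < r \<and> r < 1 \<and> cubic A B C D r = 0"
proof (cases "D < 0")
  case True
  then show ?thesis
    using sign_change_imp_root[OF continuous_on_cubic, of 0 1] assms(2)
    by (simp add: cubic_def mult_neg_pos)
next
  case False
  define q where "q x = A * x\<^sup>2 + B * x + C" for x
  have factor: "cubic A B C D x = x * q x" for x
    using assms(1) False by (simp add: cubic_def q_def power2_eq_square power3_eq_cube algebra_simps)
  have "continuous_on {0..1} q" unfolding q_def by (intro continuous_intros)
  moreover have "q 0 * q 1 < 0"
    using assms False factor[of 1] by (simp add: q_def mult_neg_pos)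
  ultimately obtain r where "0 < r" "r < 1" "q r = 0"
    using sign_change_imp_root by force
  then show ?thesis using factor by auto
qed

lemma card_unit_roots_cubic_eq_1:
  assumes "A > 0" "D \<le> 0" "C \<le> 0 \<or> 0 \<le> B" "D < 0 \<or> C < 0" "cubic A B C D 1 > 0"
  shows "card (unit_roots (cubic A B C D)) = 1"
proof -
  have "D < 0 \<or> D = 0 \<and> C < 0" using assms(2,4) by auto
  then obtain r where r: "0 < r" "r < 1" "cubic A B C D r = 0"
    using cubic_has_unit_root[OF _ assms(5)] by blast
  have "unit_roots (cubic A B C D) = {r}"
  proof (intro equalityI subsetI)
    fix x assume "x \<in> unit_roots (cubic A B C D)"
    then show "x \<in> {r}"
      using cubic_pos_roots_unique[OF assms(1-3), of x r] r by (simp add: unit_roots_def)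
  qed (use r in \<open>simp add: unit_roots_def\<close>)
  then show ?thesis by simp
qed

lemma cubic_deriv_sign:
  assumes "A > 0" "C < 0" "0 \<le> x"
  shows "0 < cubic_crit A B C"
    and "3 * A * x\<^sup>2 + 2 * B * x + C < 0 \<longleftrightarrow> x < cubic_crit A B C"
    and "3 * A * x\<^sup>2 + 2 * B * x + C > 0 \<longleftrightarrow> cubic_crit A B C < x"
proof -
  define t where "t = sqrt (4 * B\<^sup>2 - 12 * A * C)"
  define n where "n = (- 2 * B - t) / (6 * A)"
  define s where "s = cubic_crit A B C"
  have s_eq: "s = (- 2 * B + t) / (6 * A)" by (simp add: s_def cubic_crit_def t_def)
  \<comment> \<open>\<open>A C < 0\<close> makes the square root \<open>t\<close> of the discriminant exceed \<open>\<bar>2 B\<bar>\<close>, so \<open>n < 0 < s\<close>.\<close>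
  have disc: "(2 * B)\<^sup>2 < 4 * B\<^sup>2 - 12 * A * C"
    using assms by (simp add: power2_eq_square mult_pos_neg)
  have "\<bar>2 * B\<bar> < t" unfolding t_def using disc real_less_rsqrt by fastforce
  then have n: "n < 0" and s: "0 < s"
    using assms(1) by (auto simp: n_def s_eq divide_neg_pos)
  have "0 < 4 * B\<^sup>2 - 12 * A * C" using disc zero_le_power2[of "2 * B"] by linarith
  then have tt: "t * t = 4 * B\<^sup>2 - 12 * A * C" by (simp add: t_def)
  have roots_sum: "3 * A * (n + s) = - 2 * B"
    using assms(1) by (simp add: n_def s_eq field_simps)
  have "36 * A\<^sup>2 * (n * s) = 4 * B\<^sup>2 - t * t"
    using assms(1) by (simp add: n_def s_eq field_simps power2_eq_square)
  then have roots_prod: "3 * A * (n * s) = C"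
    using assms(1) unfolding tt by (simp add: power2_eq_square algebra_simps)
  have "3 * A * (x - n) * (x - s) = 3 * A * x\<^sup>2 - 3 * A * (n + s) * x + 3 * A * (n * s)"
    by (simp add: power2_eq_square algebra_simps)
  then have factor: "3 * A * x\<^sup>2 + 2 * B * x + C = 3 * A * (x - n) * (x - s)"
    unfolding roots_sum roots_prod by simp
  have "n < x" using n assms(3) by simp
  then show "0 < cubic_crit A B C"
    and "3 * A * x\<^sup>2 + 2 * B * x + C < 0 \<longleftrightarrow> x < cubic_crit A B C"
    and "3 * A * x\<^sup>2 + 2 * B * x + C > 0 \<longleftrightarrow> cubic_crit A B C < x"
    unfolding factor s_def[symmetric] using s assms(1) by (auto simp: mult_less_0_iff zero_less_mult_iff)
qed

lemma cubic_strict_decreasing: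
  assumes "A > 0" "C < 0" "0 \<le> x" "x < y" "y \<le> cubic_crit A B C"
  shows "cubic A B C D y < cubic A B C D x"
proof (rule DERIV_neg_imp_decreasing_open[OF \<open>x < y\<close> _ continuous_on_cubic])
  fix t assume "x < t" "t < y"
  then have "3 * A * t\<^sup>2 + 2 * B * t + C < 0"
    using cubic_deriv_sign(2)[OF assms(1,2), where x = t and B = B] assms(3,5) by simp
  then show "\<exists>l. DERIV (cubic A B C D) t :> l \<and> l < 0"
    using has_real_derivative_cubic by blast
qed

lemma cubic_strict_increasing:
  assumes "A > 0" "C < 0" "cubic_crit A B C \<le> x" "x < y"
  shows "cubic A B C D x < cubic A B C D y"
proof (rule DERIV_pos_imp_increasing_open[OF \<open>x < y\<close> _ continuous_on_cubic])
  fix t assume "x < t" "t < y"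
  moreover have "0 < cubic_crit A B C" using cubic_deriv_sign(1)[OF assms(1,2) order.refl] .
  ultimately have "3 * A * t\<^sup>2 + 2 * B * t + C > 0"
    using cubic_deriv_sign(3)[OF assms(1,2), where x = t and B = B] assms(3) by simp
  then show "\<exists>l. DERIV (cubic A B C D) t :> l \<and> l > 0"
    using has_real_derivative_cubic by blast
qed

lemma inj_on_cubic_below_crit:
  assumes "A > 0" "C < 0"
  shows "inj_on (cubic A B C D) {0..cubic_crit A B C}"
proof (rule inj_onI)
  fix x y assume "x \<in> {0..cubic_crit A B C}" "y \<in> {0..cubic_crit A B C}"
    "cubic A B C D x = cubic A B C D y"
  then show "x = y"
    using cubic_strict_decreasing[OF assms, where x = x and y = y and B = B and D = D]
      cubic_strict_decreasing[OF assms, where x = y and y = x and B = B and D = D]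
    by (cases x y rule: linorder_cases) auto
qed

lemma inj_on_cubic_above_crit:
  assumes "A > 0" "C < 0"
  shows "inj_on (cubic A B C D) {cubic_crit A B C..}"
proof (rule inj_onI)
  fix x y assume "x \<in> {cubic_crit A B C..}" "y \<in> {cubic_crit A B C..}"
    "cubic A B C D x = cubic A B C D y"
  then show "x = y"
    using cubic_strict_increasing[OF assms, where x = x and y = y and B = B and D = D]
      cubic_strict_increasing[OF assms, where x = y and y = x and B = B and D = D]
    by (cases x y rule: linorder_cases) auto
qed

lemma unit_roots_cubic_crit_root:
  assumes "A > 0" "C < 0" "cubic A B C D (cubic_crit A B C) = 0" "cubic_crit A B C < 1"
  shows "unit_roots (cubic A B C D) = {cubic_crit A B C}"
proof -
  let ?s = "cubic_crit A B C"
  have unique: "x = ?s" if "0 < x" "cubic A B C D x = 0" for x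
  proof (cases "x \<le> ?s")
    case True
    then show ?thesis
      using inj_onD[OF inj_on_cubic_below_crit[OF assms(1,2), where B = B and D = D], of x ?s]
        that assms(3)
      by simp
  next
    case False
    then show ?thesis
      using inj_onD[OF inj_on_cubic_above_crit[OF assms(1,2), where B = B and D = D], of x ?s]
        that assms(3)
      by simp
  qed
  have "0 < ?s" using cubic_deriv_sign(1)[OF assms(1,2) order.refl] .
  show ?thesis
  proof (intro equalityI subsetI)
    fix x assume "x \<in> unit_roots (cubic A B C D)"
    then show "x \<in> {?s}" using unique[of x] by (simp add: unit_roots_def)
  qed (use \<open>0 < ?s\<close> assms(3,4) in \<open>simp add: unit_roots_def\<close>)
qed

lemma cubic_root_below_crit:
  assumes "A > 0" "C < 0" "D > 0" "cubic A B C D (cubic_crit A B C) < 0"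
  obtains r where "0 < r" "r < cubic_crit A B C" "cubic A B C D r = 0"
    and "\<And>x. 0 \<le> x \<Longrightarrow> x \<le> cubic_crit A B C \<Longrightarrow> cubic A B C D x = 0 \<Longrightarrow> x = r"
proof -
  let ?p = "cubic A B C D" and ?s = "cubic_crit A B C"
  have "0 < ?s" using cubic_deriv_sign(1)[OF assms(1,2) order.refl] .
  moreover have "?p 0 * ?p ?s < 0" using assms(3,4) by (simp add: cubic_def mult_pos_neg)
  ultimately obtain r where r: "0 < r" "r < ?s" "?p r = 0"
    using sign_change_imp_root[OF continuous_on_cubic, where x = 0 and y = ?s] by blast
  moreover have "x = r" if "0 \<le> x" "x \<le> ?s" "?p x = 0" for x
    using inj_onD[OF inj_on_cubic_below_crit[OF assms(1,2), where B = B and D = D], of x r] that r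
    by simp
  ultimately show thesis using that by blast
qed

lemma card_unit_roots_cubic_crit_below_1:
  assumes "A > 0" "C < 0" "D > 0" "cubic A B C D (cubic_crit A B C) < 0" "cubic_crit A B C < 1"
  shows "card (unit_roots (cubic A B C D)) = (if cubic A B C D 1 > 0 then 2 else 1)"
proof -
  let ?p = "cubic A B C D" and ?s = "cubic_crit A B C"
  obtain r1 where r1: "0 < r1" "r1 < ?s" "?p r1 = 0"
    and below: "\<And>x. 0 \<le> x \<Longrightarrow> x \<le> ?s \<Longrightarrow> ?p x = 0 \<Longrightarrow> x = r1"
    using cubic_root_below_crit[OF assms(1-4)] by blast
  show ?thesis
  proof (cases "?p 1 > 0")
    case True
    then have "?p ?s * ?p 1 < 0" using assms(4) by (simp add: mult_neg_pos)
    then obtain r2 where r2: "?s < r2" "r2 < 1" "?p r2 = 0"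
      using sign_change_imp_root[OF continuous_on_cubic, where x = ?s and y = 1] assms(5) by blast
    have above: "x = r2" if "?s \<le> x" "?p x = 0" for x
      using inj_onD[OF inj_on_cubic_above_crit[OF assms(1,2), where B = B and D = D], of x r2] that r2
      by simp
    have "unit_roots ?p = {r1, r2}"
    proof (intro equalityI subsetI)
      fix x assume "x \<in> unit_roots ?p"
      then have "0 < x" "?p x = 0" by (simp_all add: unit_roots_def)
      then show "x \<in> {r1, r2}" using below[of x] above[of x] by (cases "x \<le> ?s") simp_all
    qed (use r1 r2 assms(5) in \<open>auto simp: unit_roots_def\<close>)
    moreover have "r1 \<noteq> r2" using r1 r2 by simp
    ultimately show ?thesis using True by simp
  next
    case False
    have not_above: "x \<le> ?s" if "x < 1" "?p x = 0" for x
    proof (rule ccontr)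
      assume "\<not> x \<le> ?s"
      then have "?p x < ?p 1"
        using cubic_strict_increasing[OF assms(1,2), where x = x and y = 1 and B = B and D = D] that(1)
        by simp
      with that(2) False show False by simp
    qed
    have "unit_roots ?p = {r1}"
    proof (intro equalityI subsetI)
      fix x assume "x \<in> unit_roots ?p"
      then have "0 < x" "x < 1" "?p x = 0" by (simp_all add: unit_roots_def)
      then show "x \<in> {r1}" using below[of x] not_above[of x] by simp
    qed (use r1 assms(5) in \<open>simp add: unit_roots_def\<close>)
    then show ?thesis using False by simp
  qed
qed

lemma card_unit_roots_cubic_crit_ge_1:
  assumes "A > 0" "C < 0" "D > 0" "1 \<le> cubic_crit A B C" "cubic A B C D 1 < 0"
  shows "card (unit_roots (cubic A B C D)) = 1"
proof -
  let ?p = "cubic A B C D"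
  have "?p 0 * ?p 1 < 0" using assms(3,5) by (simp add: cubic_def mult_pos_neg)
  then obtain r where r: "0 < r" "r < 1" "?p r = 0"
    using sign_change_imp_root[OF continuous_on_cubic zero_less_one] by blast
  have "x = r" if "0 < x" "x < 1" "?p x = 0" for x
    using inj_onD[OF inj_on_cubic_below_crit[OF assms(1,2), where B = B and D = D], of x r]
      that r assms(4)
    by simp
  then have "unit_roots ?p = {r}" using r unfolding unit_roots_def by blast
  then show ?thesis by simp
qed

lemma u_eq_cubic: "u a c k m = cubic (A1 k m) (A2 a c k m) (A3 a c k m) (A4 c)"
  by (simp add: fun_eq_iff u_def cubic_def)

lemma xv2_eq_cubic_crit: "xv2 a c k m = cubic_crit (A1 k m) (A2 a c k m) (A3 a c k m)"
  by (simp add: xv2_def Delta_def cubic_crit_def)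

lemma u_at_1: "a \<noteq> 0 \<Longrightarrow> u a c k m 1 = a * c * (kstar a - k)"
  by (simp add: u_def A1_def A2_def A3_def A4_def kstar_def field_simps)

lemma u_deriv_at_1:
  "1 + k \<noteq> 0 \<Longrightarrow> 3 * A1 k m + 2 * A2 a c k m + A3 a c k m = (1 + k) * (m - m2 a c k)"
  by (simp add: A1_def A2_def A3_def m2_def field_simps)

lemma u_on_prey_nullcline:
  assumes "c \<noteq> 0" "1 + k * x \<noteq> 0"
  shows "c * (1 + k * x) * (1 / (1 + k * x) - (1 - x) / c - a * x - m * x * ((1 - x) / c))
    = u a c k m x"
proof -
  define e t where "e = 1 / (1 + k * x)" and "t = (1 - x) / c"
  have et: "(1 + k * x) * e = 1" "c * t = 1 - x" using assms by (simp_all add: e_def t_def)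
  have "c * (1 + k * x) * (e - t - a * x - m * x * t)
      = c * ((1 + k * x) * e) - (1 + k * x) * (c * t) - c * (1 + k * x) * a * x
        - m * x * (1 + k * x) * (c * t)"
    by (simp add: algebra_simps)
  also have "\<dots> = u a c k m x"
    unfolding et by (simp add: u_def A1_def A2_def A3_def A4_def power2_eq_square power3_eq_cube algebra_simps)
  finally show ?thesis by (simp add: e_def t_def)
qed

lemma pos_equilibria_eq_image:
  assumes "b > 0" "c > 0" "k \<ge> 0"
  shows "pos_equilibria a b c k m = (\<lambda>x. (x, (1 - x) / c)) ` unit_roots (u a c k m)"
proof (rule set_eqI, clarify)
  fix x y
  have "(x, y) \<in> pos_equilibria a b c k m \<longleftrightarrow> 0 < x \<and> x < 1 \<and> y = (1 - x) / c \<and> u a c k m x = 0"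
  proof (cases "0 < x \<and> 0 < y")
    case True
    then have kx: "1 + k * x > 0" using assms(3) by (simp add: add_pos_nonneg)
    have "b * x * (1 - x - c * y) = 0 \<longleftrightarrow> 1 - x - c * y = 0" using True assms(1) by simp
    also have "\<dots> \<longleftrightarrow> y = (1 - x) / c" using assms(2) by (auto simp: field_simps)
    finally have prey: "b * x * (1 - x - c * y) = 0 \<longleftrightarrow> y = (1 - x) / c" .
    have "y * (1 / (1 + k * x) - y - a * x - m * x * y) = 0 \<longleftrightarrow> u a c k m x = 0"
      if "y = (1 - x) / c"
      using True assms(2) kx u_on_prey_nullcline[of c k x a m] that by auto
    moreover have "0 < (1 - x) / c \<longleftrightarrow> x < 1" using assms(2) by (simp add: zero_less_divide_iff)
    ultimately show ?thesis using True prey by (auto simp: pos_equilibria_def)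
  next
    case False
    moreover have "0 < (1 - x) / c" if "x < 1" using that assms(2) by simp
    ultimately show ?thesis by (auto simp: pos_equilibria_def)
  qed
  then show "(x, y) \<in> pos_equilibria a b c k m \<longleftrightarrow> (x, y) \<in> (\<lambda>x. (x, (1 - x) / c)) ` unit_roots (u a c k m)"
    by (auto simp: unit_roots_def)
qed

lemma card_pos_equilibria:
  assumes "b > 0" "c > 0" "k \<ge> 0"
  shows "card (pos_equilibria a b c k m) = card (unit_roots (u a c k m))"
  unfolding pos_equilibria_eq_image[OF assms] by (simp add: card_image inj_on_def)

lemma card_unit_roots_u_large_c:
  assumes "a > 0" "c > 1" "k > 0" "m > 0" "m > m1 a c k"
  shows "(u a c k m (xv2 a c k m) = 0 \<and> m > m2 a c k \<longrightarrow> card (unit_roots (u a c k m)) = 1) \<and>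
    (u a c k m (xv2 a c k m) < 0 \<longrightarrow>
      (m > m2 a c k \<and> k \<ge> kstar a \<longrightarrow> card (unit_roots (u a c k m)) = 1) \<and>
      (m > m2 a c k \<and> k < kstar a \<longrightarrow> card (unit_roots (u a c k m)) = 2) \<and>
      (m = m2 a c k \<longrightarrow> card (unit_roots (u a c k m)) = 1) \<and>
      (m < m2 a c k \<and> k > kstar a \<longrightarrow> card (unit_roots (u a c k m)) = 1))"
proof -
  let ?A = "A1 k m" and ?B = "A2 a c k m" and ?C = "A3 a c k m" and ?D = "A4 c"
  let ?s = "cubic_crit ?A ?B ?C"
  have A1_pos: "?A > 0" using assms(3,4) by (simp add: A1_def)
  have A3_neg: "?C < 0" using assms(5) by (simp add: A3_def m1_def)
  have A4_pos: "?D > 0" using assms(2) by (simp add: A4_def)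
  have deriv: "3 * ?A * 1\<^sup>2 + 2 * ?B * 1 + ?C = (1 + k) * (m - m2 a c k)"
    using u_deriv_at_1[of k m a c] assms(3) by simp
  have s_below: "?s < 1 \<longleftrightarrow> m2 a c k < m"
    using cubic_deriv_sign(3)[where B = "A2 a c k m", OF A1_pos A3_neg zero_le_one] assms(3) unfolding deriv
    by (simp add: zero_less_mult_iff)
  have s_above: "1 < ?s \<longleftrightarrow> m < m2 a c k"
    using cubic_deriv_sign(2)[where B = "A2 a c k m", OF A1_pos A3_neg zero_le_one] assms(3) unfolding deriv
    by (simp add: mult_less_0_iff)
  have u1: "u a c k m 1 = a * c * (kstar a - k)" using u_at_1 assms(1) by simp
  have "a * c > 0" using assms(1,2) by simp
  then have u1_pos: "u a c k m 1 > 0 \<longleftrightarrow> k < kstar a"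
    and u1_neg: "u a c k m 1 < 0 \<longleftrightarrow> kstar a < k"
    unfolding u1 by (auto simp: zero_less_mult_iff mult_less_0_iff)
  show ?thesis
    unfolding u_eq_cubic xv2_eq_cubic_crit
  proof (intro conjI impI; (elim conjE)?)
    assume "cubic ?A ?B ?C ?D ?s = 0" "m > m2 a c k"
    then show "card (unit_roots (cubic ?A ?B ?C ?D)) = 1"
      using unit_roots_cubic_crit_root[OF A1_pos A3_neg] s_below by simp
  next
    assume "cubic ?A ?B ?C ?D ?s < 0" "m > m2 a c k" "k \<ge> kstar a"
    then show "card (unit_roots (cubic ?A ?B ?C ?D)) = 1"
      using card_unit_roots_cubic_crit_below_1[OF A1_pos A3_neg A4_pos] s_below u1_pos by (simp add: u_eq_cubic)
  next
    assume "cubic ?A ?B ?C ?D ?s < 0" "m > m2 a c k" "k < kstar a"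
    then show "card (unit_roots (cubic ?A ?B ?C ?D)) = 2"
      using card_unit_roots_cubic_crit_below_1[OF A1_pos A3_neg A4_pos] s_below u1_pos by (simp add: u_eq_cubic)
  next
    assume "cubic ?A ?B ?C ?D ?s < 0" "m = m2 a c k"
    moreover from this have "?s = 1" using s_below s_above by linarith
    ultimately show "card (unit_roots (cubic ?A ?B ?C ?D)) = 1"
      using card_unit_roots_cubic_crit_ge_1[OF A1_pos A3_neg A4_pos] by simp
  next
    assume "cubic ?A ?B ?C ?D ?s < 0" "m < m2 a c k" "k > kstar a"
    then show "card (unit_roots (cubic ?A ?B ?C ?D)) = 1"
      using card_unit_roots_cubic_crit_ge_1[OF A1_pos A3_neg A4_pos] s_above u1_neg by (simp add: u_eq_cubic)
  qed
qed

theorem theorem5: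
  fixes a b c k m :: real
  assumes pos: "a > 0" "b > 0" "c > 0" "k > 0" "m > 0"
  shows
   "(m = m1 a c k \<and> c < 1 \<and> k < kstar a \<longrightarrow> card (pos_equilibria a b c k m) = 1) \<and>
    (m > m1 a c k \<longrightarrow>
       ((c > 1 \<and> Delta a c k m > 0 \<longrightarrow>
           (u a c k m (xv2 a c k m) = 0 \<and> m > m2 a c k \<longrightarrow> card (pos_equilibria a b c k m) = 1) \<and>
           (u a c k m (xv2 a c k m) < 0 \<longrightarrow>
              (m > m2 a c k \<and> k \<ge> kstar a \<longrightarrow> card (pos_equilibria a b c k m) = 1) \<and>
              (m > m2 a c k \<and> k < kstar a \<longrightarrow> card (pos_equilibria a b c k m) = 2) \<and>
              (m = m2 a c k \<longrightarrow> card (pos_equilibria a b c k m) = 1) \<and>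
              (m < m2 a c k \<and> k > kstar a \<longrightarrow> card (pos_equilibria a b c k m) = 1))) \<and>
        (c \<le> 1 \<and> k < kstar a \<longrightarrow> card (pos_equilibria a b c k m) = 1))) \<and>
    (m < m1 a c k \<and> c < 1 \<and> k < kstar a \<longrightarrow> card (pos_equilibria a b c k m) = 1)"
proof -
  let ?Z = "unit_roots (u a c k m)"
  have A1_pos: "A1 k m > 0" using pos by (simp add: A1_def)
  have one_root: "card ?Z = 1"
    if "c \<le> 1" "k < kstar a" "A3 a c k m \<le> 0 \<or> 0 \<le> A2 a c k m" "c < 1 \<or> A3 a c k m < 0"
  proof -
    have "u a c k m 1 > 0" using u_at_1[of a c k m] pos that(2) by simp
    then show ?thesis
      using card_unit_roots_cubic_eq_1[OF A1_pos] that unfolding u_eq_cubic by (simp add: A4_def)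
  qed
  have A3: "A3 a c k m = m1 a c k - m" by (simp add: A3_def m1_def)
  have A2_nonneg: "0 \<le> A2 a c k m" if "m < m1 a c k"
  proof -
    have "A2 a c k m = k * (m1 a c k - m + k) + m" by (simp add: A2_def m1_def algebra_simps)
    then show ?thesis using that pos by simp
  qed
  show ?thesis
    unfolding card_pos_equilibria[OF pos(2,3) less_imp_le[OF pos(4)]]
    using one_root A3 A2_nonneg card_unit_roots_u_large_c[OF pos(1) _ pos(4,5)] by auto
qed

end
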